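(* Let $(X,G)$ be a dislocation space with $X$ a reflexive Banach space, and let $(u_n)$ be a bounded sequence in $X$. Suppose that sequences $(g^{(1)}_n),(g^{(2)}_n)\subset G$ and $w^{(1)},w^{(2)}\in X$ satisfy $(g^{(1)}_n)^{-1}u_n\to w^{(1)}$ weakly in $X$ and $(g^{(2)}_n)^{-1}(u_n-g^{(1)}_nw^{(1)})\to w^{(2)}$ weakly in $X$, with $w^{(2)}\neq0$. Then $(g^{(1)}_n)^{-1}g^{(2)}_n\rightharpoonup 0$ operator-weakly as $n\to\infty$.
   Context: Dislocation space: a Banach space $X$ with a group $G\subset\mathcal{B}(X)$ (under composition) of bijective linear isometries such that (1) every $(g_n)\subset G$ with $g_n\not\rightharpoonup0$ has an operator-strongly convergent subsequence (limit in $\mathcal{B}(X)$), and (2) for every $(g_n)\subset G$ with $g_n\not\rightharpoonup0$ and every $(u_n)\subset X$ with $u_n\to0$ weakly, there is a subsequence with $g_{n_j}u_{n_j}\to0$ weakly. Here $A_n\rightharpoonup A$ (operator-weakly) means $A_nu\to Au$ weakly for all $u\in X$, and operator-strong convergence means $A_nu\to Au$ in norm for all $u$. *)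

theory Defs
  imports "HOL-Analysis.Analysis"
begin

definition weak_conv :: "(nat \<Rightarrow> 'a::real_normed_vector) \<Rightarrow> 'a \<Rightarrow> bool" where
  "weak_conv x l \<longleftrightarrow> (\<forall>f :: 'a \<Rightarrow>\<^sub>L real. (\<lambda>n. blinfun_apply f (x n)) \<longlonglongrightarrow> blinfun_apply f l)"

definition op_weak_conv :: "(nat \<Rightarrow> 'a \<Rightarrow> 'a::real_normed_vector) \<Rightarrow> ('a \<Rightarrow> 'a) \<Rightarrow> bool" where
  "op_weak_conv A B \<longleftrightarrow> (\<forall>u. weak_conv (\<lambda>n. A n u) (B u))"

definition op_strong_conv :: "(nat \<Rightarrow> 'a \<Rightarrow> 'a::real_normed_vector) \<Rightarrow> ('a \<Rightarrow> 'a) \<Rightarrow> bool" where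
  "op_strong_conv A B \<longleftrightarrow> (\<forall>u. (\<lambda>n. A n u) \<longlonglongrightarrow> B u)"

definition reflexive_space :: "'a::real_normed_vector itself \<Rightarrow> bool" where
  "reflexive_space _ \<longleftrightarrow>
     (\<forall>\<Phi> :: ('a \<Rightarrow>\<^sub>L real) \<Rightarrow>\<^sub>L real. \<exists>x::'a. \<forall>f. blinfun_apply \<Phi> f = blinfun_apply f x)"

definition dislocation_space :: "('a::banach \<Rightarrow>\<^sub>L 'a) set \<Rightarrow> bool" where
  "dislocation_space G \<longleftrightarrow>
     (\<forall>g\<in>G. bij (blinfun_apply g) \<and> (\<forall>x. norm (blinfun_apply g x) = norm x)) \<and>
     id_blinfun \<in> G \<and>
     (\<forall>g\<in>G. \<forall>h\<in>G. g o\<^sub>L h \<in> G) \<and>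
     (\<forall>g\<in>G. \<exists>h\<in>G. blinfun_apply h = inv (blinfun_apply g)) \<and>
     (\<forall>gs :: nat \<Rightarrow> 'a \<Rightarrow>\<^sub>L 'a. (\<forall>n. gs n \<in> G) \<and>
         \<not> op_weak_conv (\<lambda>n. blinfun_apply (gs n)) (\<lambda>_. 0) \<longrightarrow>
         (\<exists>r A. strict_mono r \<and> op_strong_conv (\<lambda>j. blinfun_apply (gs (r j))) (blinfun_apply A))) \<and>
     (\<forall>(gs :: nat \<Rightarrow> 'a \<Rightarrow>\<^sub>L 'a) (us :: nat \<Rightarrow> 'a). (\<forall>n. gs n \<in> G) \<and>
         \<not> op_weak_conv (\<lambda>n. blinfun_apply (gs n)) (\<lambda>_. 0) \<and> weak_conv us 0 \<longrightarrow>
         (\<exists>r. strict_mono r \<and> weak_conv (\<lambda>j. blinfun_apply (gs (r j)) (us (r j))) 0))"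

end

(* Put h_n = (g1_n)^-1 g2_n and suppose h_n does not tend to 0 operator-weakly. By condition (1) a
   subsequence h_(r j) converges strongly to some A; its inverses k_j are isometries, so k_j (A w) -> w
   in norm, and taking w != 0 shows that k_j does not tend to 0 operator-weakly either. But k_j maps
   (g1_(r j))^-1 u_(r j) - w1, which tends weakly to 0, onto (g2_(r j))^-1 (u_(r j) - g1_(r j) w1),
   which tends weakly to w2; condition (2) for k_j then gives w2 = 0. Uniqueness of weak limits needs
   a norming functional, i.e. the Hahn-Banach theorem, proved below with Zorn's lemma. *)

theory Submission
  imports Defs
begin

text \<open>A partial linear functional dominated by the norm, represented by its graph so that Zorn's
  lemma can be applied to set inclusion.\<close>
definition dominated_linear_graph :: "('a::real_normed_vector \<times> real) set \<Rightarrow> bool" where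
  "dominated_linear_graph H \<longleftrightarrow> (0, 0) \<in> H
    \<and> (\<forall>x a y b. (x, a) \<in> H \<longrightarrow> (y, b) \<in> H \<longrightarrow> (x + y, a + b) \<in> H)
    \<and> (\<forall>t x a. (x, a) \<in> H \<longrightarrow> (t *\<^sub>R x, t * a) \<in> H)
    \<and> (\<forall>x a. (x, a) \<in> H \<longrightarrow> a \<le> norm x)"

lemma dominated_linear_graphD:
  assumes "dominated_linear_graph H"
  shows dominated_linear_graph_zero: "(0, 0) \<in> H"
    and dominated_linear_graph_add: "(x, a) \<in> H \<Longrightarrow> (y, b) \<in> H \<Longrightarrow> (x + y, a + b) \<in> H"
    and dominated_linear_graph_scale: "(x, a) \<in> H \<Longrightarrow> (t *\<^sub>R x, t * a) \<in> H"
    and dominated_linear_graph_le_norm: "(x, a) \<in> H \<Longrightarrow> a \<le> norm x"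
  using assms unfolding dominated_linear_graph_def by blast+

lemma dominated_linear_graph_unique:
  assumes H: "dominated_linear_graph H" and "(x, a) \<in> H" "(x, b) \<in> H"
  shows "a = b"
proof -
  have "(x + (-1) *\<^sub>R x, a + (-1) * b) \<in> H"
    using assms by (intro dominated_linear_graph_add dominated_linear_graph_scale)
  then have diff: "(0, a - b) \<in> H" by simp
  have "a - b \<le> 0" using dominated_linear_graph_le_norm[OF H diff] by simp
  moreover have "(-1) * (a - b) \<le> 0"
    using dominated_linear_graph_le_norm[OF H dominated_linear_graph_scale[OF H diff, of "-1"]] by simp
  ultimately show ?thesis by simp
qed

lemma dominated_linear_graph_extension_value:
  assumes H: "dominated_linear_graph H"
  obtains c where "\<And>x a. (x, a) \<in> H \<Longrightarrow> a - norm (x - y) \<le> c"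
    and "\<And>x a. (x, a) \<in> H \<Longrightarrow> c \<le> norm (x + y) - a"
proof -
  have sep: "a - norm (x - y) \<le> norm (x' + y) - a'" if "(x, a) \<in> H" "(x', a') \<in> H" for x a x' a'
  proof -
    have "a + a' \<le> norm ((x - y) + (x' + y))"
      using dominated_linear_graph_le_norm[OF H dominated_linear_graph_add[OF H that]] by simp
    also have "\<dots> \<le> norm (x - y) + norm (x' + y)" by (rule norm_triangle_ineq)
    finally show ?thesis by linarith
  qed
  define S where "S = {a - norm (x - y) | x a. (x, a) \<in> H}"
  have "S \<noteq> {}" using dominated_linear_graph_zero[OF H] unfolding S_def by blast
  moreover have "bdd_above S"
    unfolding S_def bdd_above_def using sep[OF _ dominated_linear_graph_zero[OF H]] by auto
  ultimately show ?thesis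
    by (intro that[of "Sup S"] cSup_upper cSup_least) (auto simp: S_def intro: sep)
qed

lemma dominated_linear_graph_adjoin:
  assumes H: "dominated_linear_graph H"
    and lower: "\<And>x a. (x, a) \<in> H \<Longrightarrow> a - norm (x - y) \<le> c"
    and upper: "\<And>x a. (x, a) \<in> H \<Longrightarrow> c \<le> norm (x + y) - a"
  shows "dominated_linear_graph {(x + t *\<^sub>R y, a + t * c) | x a t. (x, a) \<in> H}"
    (is "dominated_linear_graph ?H'")
  unfolding dominated_linear_graph_def
proof (intro conjI allI impI)
  show "(0, 0) \<in> ?H'"
    using dominated_linear_graph_zero[OF H] by force
next
  fix x a x' a' assume "(x, a) \<in> ?H'" "(x', a') \<in> ?H'"
  then obtain x1 a1 t1 x2 a2 t2 where "(x1, a1) \<in> H" "(x2, a2) \<in> H"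
    and "x = x1 + t1 *\<^sub>R y" "a = a1 + t1 * c" "x' = x2 + t2 *\<^sub>R y" "a' = a2 + t2 * c"
    by blast
  moreover from this have "x + x' = (x1 + x2) + (t1 + t2) *\<^sub>R y" "a + a' = (a1 + a2) + (t1 + t2) * c"
    by (simp_all add: algebra_simps)
  ultimately show "(x + x', a + a') \<in> ?H'"
    using dominated_linear_graph_add[OF H] by blast
next
  fix s x a assume "(x, a) \<in> ?H'"
  then obtain x1 a1 t where "(x1, a1) \<in> H" "x = x1 + t *\<^sub>R y" "a = a1 + t * c"
    by blast
  moreover from this have "s *\<^sub>R x = s *\<^sub>R x1 + (s * t) *\<^sub>R y" "s * a = s * a1 + (s * t) * c"
    by (simp_all add: algebra_simps)
  ultimately show "(s *\<^sub>R x, s * a) \<in> ?H'"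
    using dominated_linear_graph_scale[OF H] by blast
next
  fix x a assume "(x, a) \<in> ?H'"
  then obtain x1 a1 t where x1: "(x1, a1) \<in> H" and "x = x1 + t *\<^sub>R y" "a = a1 + t * c"
    by blast
  moreover have "a1 + t * c \<le> norm (x1 + t *\<^sub>R y)"
  proof (cases t "0::real" rule: linorder_cases)
    case equal
    then show ?thesis using dominated_linear_graph_le_norm[OF H x1] by simp
  next
    case greater
    have "t * c \<le> t * (norm ((1 / t) *\<^sub>R x1 + y) - (1 / t) * a1)"
      using upper[OF dominated_linear_graph_scale[OF H x1, of "1 / t"]] greater
      by (simp add: mult_left_mono)
    also have "\<dots> = norm (t *\<^sub>R ((1 / t) *\<^sub>R x1 + y)) - a1"
      using greater by (simp add: right_diff_distrib)
    also have "t *\<^sub>R ((1 / t) *\<^sub>R x1 + y) = x1 + t *\<^sub>R y"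
      using greater by (simp add: algebra_simps)
    finally show ?thesis by simp
  next
    case less
    have "- t * ((1 / - t) * a1 - norm ((1 / - t) *\<^sub>R x1 - y)) \<le> - t * c"
      using lower[OF dominated_linear_graph_scale[OF H x1, of "1 / - t"]] less
      by (simp add: mult_left_mono)
    also have "- t * ((1 / - t) * a1 - norm ((1 / - t) *\<^sub>R x1 - y))
        = a1 - norm ((- t) *\<^sub>R ((1 / - t) *\<^sub>R x1 - y))"
      using less by (simp add: right_diff_distrib)
    also have "(- t) *\<^sub>R ((1 / - t) *\<^sub>R x1 - y) = x1 + t *\<^sub>R y"
      using less by (simp add: algebra_simps)
    finally show ?thesis by simp
  qed
  ultimately show "a \<le> norm x" by simp
qed

lemma dominated_linear_graph_Union_chain:
  assumes "C \<noteq> {}" and chain: "\<And>X Y. X \<in> C \<Longrightarrow> Y \<in> C \<Longrightarrow> X \<subseteq> Y \<or> Y \<subseteq> X"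
    and H: "\<And>X. X \<in> C \<Longrightarrow> dominated_linear_graph X"
  shows "dominated_linear_graph (\<Union>C)"
  unfolding dominated_linear_graph_def
proof (intro conjI allI impI)
  show "(0, 0) \<in> \<Union>C" using assms dominated_linear_graph_zero by blast
next
  fix x a y b assume "(x, a) \<in> \<Union>C" "(y, b) \<in> \<Union>C"
  then obtain X Y where XY: "X \<in> C" "Y \<in> C" "(x, a) \<in> X" "(y, b) \<in> Y" by blast
  then have "(x, a) \<in> X \<union> Y" "(y, b) \<in> X \<union> Y" "X \<union> Y \<in> C"
    using chain[OF XY(1,2)] by (auto simp: sup_absorb1 sup_absorb2)
  then show "(x + y, a + b) \<in> \<Union>C"
    using H dominated_linear_graph_add by blast
qed (use H dominated_linear_graph_scale dominated_linear_graph_le_norm in blast)+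

lemma dominated_linear_graph_total_blinfun:
  assumes H: "dominated_linear_graph H" and total: "\<And>x. \<exists>a. (x, a) \<in> H"
  obtains f :: "'a::real_normed_vector \<Rightarrow>\<^sub>L real" where "\<And>x a. (x, a) \<in> H \<Longrightarrow> blinfun_apply f x = a"
proof -
  define f where "f x = (THE a. (x, a) \<in> H)" for x
  have graph: "(x, a) \<in> H \<longleftrightarrow> f x = a" for x a
    unfolding f_def using total dominated_linear_graph_unique[OF H]
    by (metis (mono_tags, lifting) theI_unique)
  have "bounded_linear f"
  proof (rule bounded_linear_intro[where K = 1])
    show "f (x + y) = f x + f y" for x y
      using dominated_linear_graph_add[OF H] graph by blast
    show "f (r *\<^sub>R x) = r *\<^sub>R f x" for r x
      using dominated_linear_graph_scale[OF H] graph by simp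
    show "norm (f x) \<le> norm x * 1" for x
      using dominated_linear_graph_le_norm[OF H] dominated_linear_graph_scale[OF H, of x "f x" "-1"] graph
      by (smt (verit) norm_minus_cancel real_norm_def scaleR_minus1_left)
  qed
  then show ?thesis
    using that[of "Blinfun f"] graph by (simp add: bounded_linear_Blinfun_apply)
qed

lemma exists_blinfun_norming:
  fixes w :: "'a::real_normed_vector"
  obtains f :: "'a \<Rightarrow>\<^sub>L real" where "blinfun_apply f w = norm w"
proof -
  define A where "A = {H. dominated_linear_graph H \<and> (w, norm w) \<in> H}"
  define L where "L = {(t *\<^sub>R w, t * norm w) | t. True}"
  have "dominated_linear_graph L"
    unfolding dominated_linear_graph_def
  proof (intro conjI allI impI)
    show "(0, 0) \<in> L" unfolding L_def by (auto intro: exI[of _ 0])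
  next
    fix x a y b assume "(x, a) \<in> L" "(y, b) \<in> L"
    then obtain t t' where "x = t *\<^sub>R w" "a = t * norm w" "y = t' *\<^sub>R w" "b = t' * norm w"
      unfolding L_def by blast
    then show "(x + y, a + b) \<in> L"
      unfolding L_def by (auto intro!: exI[of _ "t + t'"] simp: scaleR_add_left distrib_right)
  next
    fix s x a assume "(x, a) \<in> L"
    then obtain t where "x = t *\<^sub>R w" "a = t * norm w" unfolding L_def by blast
    then show "(s *\<^sub>R x, s * a) \<in> L" unfolding L_def by (auto intro!: exI[of _ "s * t"])
  next
    fix x a assume "(x, a) \<in> L"
    then show "a \<le> norm x" unfolding L_def by (auto intro!: mult_right_mono)
  qed
  moreover have "(w, norm w) \<in> L" unfolding L_def by (auto intro: exI[of _ 1])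
  ultimately have "L \<in> A" unfolding A_def by blast
  have "\<exists>M\<in>A. \<forall>X\<in>A. M \<subseteq> X \<longrightarrow> X = M"
  proof (rule subset_Zorn_nonempty)
    show "A \<noteq> {}" using \<open>L \<in> A\<close> by blast
  next
    fix C assume "C \<noteq> {}" "subset.chain A C"
    then have "C \<noteq> {}" "\<And>X Y. X \<in> C \<Longrightarrow> Y \<in> C \<Longrightarrow> X \<subseteq> Y \<or> Y \<subseteq> X"
      "\<And>X. X \<in> C \<Longrightarrow> dominated_linear_graph X \<and> (w, norm w) \<in> X"
      unfolding subset.chain_def A_def by auto
    then show "\<Union>C \<in> A"
      unfolding A_def using dominated_linear_graph_Union_chain[of C] by blast
  qed
  then obtain M where M: "M \<in> A" and maximal: "\<And>X. X \<in> A \<Longrightarrow> M \<subseteq> X \<Longrightarrow> X = M"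
    by blast
  have H: "dominated_linear_graph M" and wM: "(w, norm w) \<in> M"
    using M unfolding A_def by auto
  have "\<exists>a. (x, a) \<in> M" for x
  proof -
    obtain c where "\<And>y a. (y, a) \<in> M \<Longrightarrow> a - norm (y - x) \<le> c"
      and "\<And>y a. (y, a) \<in> M \<Longrightarrow> c \<le> norm (y + x) - a"
      using dominated_linear_graph_extension_value[OF H] by metis
    note adjoined = dominated_linear_graph_adjoin[OF H this]
    define M' where "M' = {(y + t *\<^sub>R x, a + t * c) | y a t. (y, a) \<in> M}"
    have "M \<subseteq> M'"
    proof
      fix p assume "p \<in> M"
      moreover obtain y a where "p = (y, a)" by fastforce
      ultimately show "p \<in> M'"
        unfolding M'_def by (intro CollectI exI[of _ y] exI[of _ a] exI[of _ 0]) simp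
    qed
    moreover from this have "M' \<in> A"
      using adjoined wM unfolding A_def M'_def by blast
    ultimately have "M' = M" using maximal by blast
    moreover have "(x, c) \<in> M'"
      unfolding M'_def using dominated_linear_graph_zero[OF H]
      by (intro CollectI exI[of _ 0] exI[of _ 0] exI[of _ 1]) simp
    ultimately show ?thesis by blast
  qed
  then show ?thesis
    using dominated_linear_graph_total_blinfun[OF H] wM that by metis
qed

lemma weak_conv_unique:
  assumes "weak_conv x l" "weak_conv x l'"
  shows "l = l'"
proof -
  obtain f :: "'a \<Rightarrow>\<^sub>L real" where f: "blinfun_apply f (l - l') = norm (l - l')"
    using exists_blinfun_norming by blast
  have "blinfun_apply f l = blinfun_apply f l'"
    using assms LIMSEQ_unique unfolding weak_conv_def by blast
  then show ?thesis using f by (simp add: blinfun.diff_right)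
qed

lemma weak_conv_subseq:
  assumes "weak_conv x l" "strict_mono r"
  shows "weak_conv (\<lambda>n. x (r n)) l"
  using assms LIMSEQ_subseq_LIMSEQ unfolding weak_conv_def o_def by blast

lemma weak_conv_diff_const:
  assumes "weak_conv x l"
  shows "weak_conv (\<lambda>n. x n - c) (l - c)"
  using assms unfolding weak_conv_def by (auto simp: blinfun.diff_right intro!: tendsto_diff)

lemma tendsto_imp_weak_conv:
  assumes "x \<longlonglongrightarrow> l"
  shows "weak_conv x l"
  unfolding weak_conv_def by (intro allI bounded_linear.tendsto[OF blinfun.bounded_linear_right] assms)

lemma isometric_left_inverse_tendsto:
  fixes h k :: "nat \<Rightarrow> 'a::real_normed_vector \<Rightarrow>\<^sub>L 'a"
  assumes lim: "(\<lambda>j. blinfun_apply (h j) w) \<longlonglongrightarrow> y"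
    and left_inverse: "\<And>j x. blinfun_apply (k j) (blinfun_apply (h j) x) = x"
    and isometry: "\<And>j x. norm (blinfun_apply (k j) x) = norm x"
  shows "(\<lambda>j. blinfun_apply (k j) y) \<longlonglongrightarrow> w"
proof -
  have "norm (blinfun_apply (k j) y - w) = norm (blinfun_apply (h j) w - y)" for j
  proof -
    have "blinfun_apply (k j) y - w = blinfun_apply (k j) (y - blinfun_apply (h j) w)"
      by (simp add: blinfun.diff_right left_inverse)
    then show ?thesis by (simp only: isometry norm_minus_commute)
  qed
  moreover have "(\<lambda>j. norm (blinfun_apply (h j) w - y)) \<longlonglongrightarrow> 0"
    using lim by (simp add: LIM_zero tendsto_norm_zero)
  ultimately have "(\<lambda>j. norm (blinfun_apply (k j) y - w)) \<longlonglongrightarrow> 0"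
    by simp
  then show ?thesis
    by (simp add: LIM_zero_cancel tendsto_norm_zero_iff)
qed

lemma dislocation_space_bij:
  "dislocation_space G \<Longrightarrow> g \<in> G \<Longrightarrow> bij (blinfun_apply g)"
  and dislocation_space_norm:
  "dislocation_space G \<Longrightarrow> g \<in> G \<Longrightarrow> norm (blinfun_apply g x) = norm x"
  and dislocation_space_compose:
  "dislocation_space G \<Longrightarrow> g \<in> G \<Longrightarrow> h \<in> G \<Longrightarrow> g o\<^sub>L h \<in> G"
  and dislocation_space_inverse:
  "dislocation_space G \<Longrightarrow> g \<in> G \<Longrightarrow> \<exists>h\<in>G. blinfun_apply h = inv (blinfun_apply g)"
  unfolding dislocation_space_def by blast+

lemma dislocation_space_strong_subseq:
  assumes "dislocation_space G" "\<And>n. gs n \<in> G"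
    and "\<not> op_weak_conv (\<lambda>n. blinfun_apply (gs n)) (\<lambda>_. 0)"
  obtains r A where "strict_mono r" "op_strong_conv (\<lambda>j. blinfun_apply (gs (r j))) (blinfun_apply A)"
  using assms unfolding dislocation_space_def by blast

lemma dislocation_space_weak_null_subseq:
  assumes "dislocation_space G" "\<And>n. gs n \<in> G"
    and "\<not> op_weak_conv (\<lambda>n. blinfun_apply (gs n)) (\<lambda>_. 0)" and "weak_conv us 0"
  obtains r where "strict_mono r" "weak_conv (\<lambda>j. blinfun_apply (gs (r j)) (us (r j))) 0"
  using assms unfolding dislocation_space_def by blast

lemma dislocation_space_inverse_seq:
  assumes "dislocation_space G" "\<And>n. gs n \<in> G"
  obtains hs where "\<And>n. hs n \<in> G" "\<And>n. blinfun_apply (hs n) = inv (blinfun_apply (gs n))"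
  using dislocation_space_inverse[OF assms(1) assms(2)] by metis

text \<open>The inverses, being isometries, pull A w back to w in norm, where A is the strong limit
  provided by condition (1).\<close>
lemma dislocation_space_inverses_not_weak_null:
  assumes G: "dislocation_space G" and hs: "\<And>n. hs n \<in> G"
    and not_null: "\<not> op_weak_conv (\<lambda>n. blinfun_apply (hs n)) (\<lambda>_. 0)"
  obtains r ks where "strict_mono r" "\<And>j. ks j \<in> G"
    "\<And>j x. blinfun_apply (ks j) (blinfun_apply (hs (r j)) x) = x"
    "\<not> op_weak_conv (\<lambda>j. blinfun_apply (ks j)) (\<lambda>_. 0)"
proof -
  obtain r A where r: "strict_mono r"
    and strong: "op_strong_conv (\<lambda>j. blinfun_apply (hs (r j))) (blinfun_apply A)"
    by (rule dislocation_space_strong_subseq[OF G hs not_null])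
  obtain ks where ks: "\<And>j. ks j \<in> G" "\<And>j. blinfun_apply (ks j) = inv (blinfun_apply (hs (r j)))"
    using dislocation_space_inverse_seq[OF G, of "\<lambda>j. hs (r j)"] hs by blast
  have left_inverse: "blinfun_apply (ks j) (blinfun_apply (hs (r j)) x) = x" for j x
    using ks(2) dislocation_space_bij[OF G hs] by (simp add: bij_is_inj)
  obtain w where "\<not> weak_conv (\<lambda>n. blinfun_apply (hs n) w) 0"
    using not_null unfolding op_weak_conv_def by blast
  then have "w \<noteq> 0"
    using tendsto_imp_weak_conv[OF tendsto_const[of 0]] by auto
  have "(\<lambda>j. blinfun_apply (hs (r j)) w) \<longlonglongrightarrow> blinfun_apply A w"
    using strong unfolding op_strong_conv_def by blast
  then have "weak_conv (\<lambda>j. blinfun_apply (ks j) (blinfun_apply A w)) w"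
    using isometric_left_inverse_tendsto[where h = "\<lambda>j. hs (r j)"] left_inverse
      dislocation_space_norm[OF G ks(1)] tendsto_imp_weak_conv by blast
  then have "\<not> op_weak_conv (\<lambda>j. blinfun_apply (ks j)) (\<lambda>_. 0)"
    unfolding op_weak_conv_def using weak_conv_unique \<open>w \<noteq> 0\<close> by blast
  then show ?thesis using that r ks(1) left_inverse by blast
qed

theorem mainTheorem5:
  fixes G :: "('a::banach \<Rightarrow>\<^sub>L 'a) set"
    and u :: "nat \<Rightarrow> 'a"
    and g1 g2 :: "nat \<Rightarrow> ('a \<Rightarrow>\<^sub>L 'a)"
    and w1 w2 :: 'a
  assumes "dislocation_space G"
    and "reflexive_space TYPE('a)"
    and "bounded (range u)"
    and "\<forall>n. g1 n \<in> G" and "\<forall>n. g2 n \<in> G"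
    and "weak_conv (\<lambda>n. inv (blinfun_apply (g1 n)) (u n)) w1"
    and "weak_conv (\<lambda>n. inv (blinfun_apply (g2 n)) (u n - blinfun_apply (g1 n) w1)) w2"
    and "w2 \<noteq> 0"
  shows "op_weak_conv (\<lambda>n. inv (blinfun_apply (g1 n)) \<circ> blinfun_apply (g2 n)) (\<lambda>_. 0)"
proof (rule ccontr)
  assume not_null: "\<not> ?thesis"
  note G = assms(1)
  obtain k1 where k1: "\<And>n. k1 n \<in> G" "\<And>n. blinfun_apply (k1 n) = inv (blinfun_apply (g1 n))"
    using dislocation_space_inverse_seq[OF G, of g1] assms(4) by blast
  define hs where "hs n = k1 n o\<^sub>L g2 n" for n
  have hs_apply: "blinfun_apply (hs n) = inv (blinfun_apply (g1 n)) \<circ> blinfun_apply (g2 n)" for n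
    unfolding hs_def using k1(2) by auto
  have "hs n \<in> G" for n
    unfolding hs_def using dislocation_space_compose[OF G k1(1)] assms(5) by blast
  moreover have "\<not> op_weak_conv (\<lambda>n. blinfun_apply (hs n)) (\<lambda>_. 0)"
    using not_null by (simp add: hs_apply)
  ultimately obtain r ks where r: "strict_mono r" and ks: "\<And>j. ks j \<in> G"
    and left_inverse: "\<And>j x. blinfun_apply (ks j) (blinfun_apply (hs (r j)) x) = x"
    and ks_not_null: "\<not> op_weak_conv (\<lambda>j. blinfun_apply (ks j)) (\<lambda>_. 0)"
    using dislocation_space_inverses_not_weak_null[OF G] by blast
  define v where "v n = inv (blinfun_apply (g2 n)) (u n - blinfun_apply (g1 n) w1)" for n
  define us where "us j = inv (blinfun_apply (g1 (r j))) (u (r j)) - w1" for j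
  have "blinfun_apply (hs n) (v n) = inv (blinfun_apply (g1 n)) (u n) - w1" for n
  proof -
    have "blinfun_apply (hs n) (v n) = blinfun_apply (k1 n) (u n - blinfun_apply (g1 n) w1)"
      unfolding hs_apply v_def k1(2)
      using dislocation_space_bij[OF G] assms(5) by (simp add: bij_is_surj surj_f_inv_f)
    also have "\<dots> = inv (blinfun_apply (g1 n)) (u n) - w1"
      using dislocation_space_bij[OF G] assms(4)
      by (simp add: blinfun.diff_right bij_is_inj flip: k1(2)) (simp add: k1(2) bij_is_inj)
    finally show ?thesis .
  qed
  then have ks_us: "blinfun_apply (ks j) (us j) = v (r j)" for j
    unfolding us_def using left_inverse by metis
  have "weak_conv us 0"
    unfolding us_def using weak_conv_diff_const[OF weak_conv_subseq[OF assms(6) r], of w1] by simp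
  then obtain r' where r': "strict_mono r'"
    and "weak_conv (\<lambda>i. blinfun_apply (ks (r' i)) (us (r' i))) 0"
    using dislocation_space_weak_null_subseq[OF G ks ks_not_null] by blast
  then have "weak_conv (\<lambda>i. v (r (r' i))) 0"
    by (simp only: ks_us)
  moreover have "weak_conv (\<lambda>i. v (r (r' i))) w2"
    using weak_conv_subseq[OF weak_conv_subseq[OF assms(7)[folded v_def] r] r'] .
  ultimately show False
    using weak_conv_unique assms(8) by blast
qed

end
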